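(* Let $d\ge 1$, let $\Omega=\operatorname{diag}(\omega_j)_{j=1}^d\in\mathbb{R}^{d\times d}$ with all $\omega_j\ge 0$, let $\omega=\min_{j:\,\omega_j>0}\omega_j$ be the smallest nonzero frequency, and let $A\in\mathbb{C}^{d\times d}$ be self-adjoint. Let $0<h\le 1$ and let $\psi_1,\phi\colon\mathbb{R}\to\mathbb{R}$ be even functions such that for constants $c_0,c_1\ge0$ \[ |\psi_1(\xi)|\le c_0,\qquad |\phi(\xi)|\le c_0,\qquad |\phi(\xi)-1|\le c_1|\xi|\qquad\text{for all }\xi\in\mathbb{R}. \] Set $\Psi_1=\psi_1(h\Omega)$, $\Phi=\phi(h\Omega)$, and define for $q,\dot q\in\mathbb{C}^d$ \[ \mathcal{H}(q,\dot{q}) = \tfrac12 \|\Omega q\|^2 + \tfrac12 \|\dot{q}\|^2 + \tfrac12 \operatorname{Re}\big((\cos(h\Omega) \Phi q)^* A \Phi q\big) - \tfrac18 h^2 \|\Psi_1 A \Phi q\|^2, \] \[ H(q,\dot q)=\tfrac12 \|\Omega q\|^2 + \tfrac12 \|\dot{q}\|^2 + \tfrac12 q^*Aq . \] Then for all $q,\dot q\in\mathbb{C}^d$, \begin{align*} \big|\mathcal{H}(q,\dot{q}) - \tfrac12 \|\Omega q\|^2 - \tfrac12 \|\dot{q}\|^2\big| &\le \big(\breve{C}+\widehat{C} h^2\big) \|q\|^2, \\ \big|\mathcal{H}(q,\dot{q}) - H(q,\dot{q})\big| &\le \widetilde{C} \min\big(h,\omega^{-1}\big) \|q\| \, \|\Omega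 q\| + \widehat{C} h^2 \|q\|^2 \end{align*} with $\breve{C} = \tfrac12 c_0^2 \|A\|$, $\widehat{C} = \tfrac18 c_0^4 \|A\|^2$ and $\widetilde{C} = \tfrac12 \big(2 c_0^2 + (c_0+1)\max(c_0+1,c_1)\big) \|A\|$.
   Context: $\|\cdot\|$ is the Euclidean norm on $\mathbb{C}^d$ and, for matrices, the induced operator norm; ${}^*$ denotes conjugate transpose. For a function $f\colon\mathbb{R}\to\mathbb{R}$, $f(h\Omega)$ denotes the diagonal matrix $\operatorname{diag}(f(h\omega_j))_{j=1}^d$. *)

theory Defs
  imports "HOL-Analysis.Analysis"
begin

text \<open>Dimension d = CARD('n). Vectors in C^d are complex^'n, matrices complex^'n^'n.
  The Euclidean norm on complex^'n is the library norm (L2 of component moduli).\<close>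

definition cinner :: "complex^'n::finite \<Rightarrow> complex^'n \<Rightarrow> complex" where
  "cinner x y = (\<Sum>i\<in>UNIV. cnj (x$i) * y$i)"

definition diagm :: "('n::finite \<Rightarrow> real) \<Rightarrow> complex^'n^'n" where
  "diagm f = (\<chi> i j. if i = j then complex_of_real (f i) else 0)"

definition fdiag :: "(real \<Rightarrow> real) \<Rightarrow> real \<Rightarrow> ('n::finite \<Rightarrow> real) \<Rightarrow> complex^'n^'n" where
  "fdiag f h om = diagm (\<lambda>j. f (h * om j))"

definition self_adjoint :: "complex^'n::finite^'n \<Rightarrow> bool" where
  "self_adjoint A \<longleftrightarrow> (\<forall>i j. A$i$j = cnj (A$j$i))"

definition opnorm :: "complex^'n::finite^'n \<Rightarrow> real" where
  "opnorm A = onorm (\<lambda>x. A *v x)"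

definition min_freq :: "('n::finite \<Rightarrow> real) \<Rightarrow> real" where
  "min_freq om = Min {om j | j. om j > 0}"

definition mod_energy ::
  "real \<Rightarrow> ('n::finite \<Rightarrow> real) \<Rightarrow> complex^'n^'n \<Rightarrow> (real \<Rightarrow> real) \<Rightarrow> (real \<Rightarrow> real)
   \<Rightarrow> complex^'n \<Rightarrow> complex^'n \<Rightarrow> real" where
  "mod_energy h om A psi1 phi q qd =
     (1/2) * (norm (diagm om *v q))\<^sup>2 + (1/2) * (norm qd)\<^sup>2
     + (1/2) * Re (cinner (fdiag cos h om *v (fdiag phi h om *v q)) (A *v (fdiag phi h om *v q)))
     - (1/8) * h\<^sup>2 * (norm (fdiag psi1 h om *v (A *v (fdiag phi h om *v q))))\<^sup>2"

definition energy :: "('n::finite \<Rightarrow> real) \<Rightarrow> complex^'n^'n \<Rightarrow> complex^'n \<Rightarrow> complex^'n \<Rightarrow> real" where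
  "energy om A q qd =
     (1/2) * (norm (diagm om *v q))\<^sup>2 + (1/2) * (norm qd)\<^sup>2 + (1/2) * Re (cinner q (A *v q))"

end

theory Submission
  imports Defs
begin

text \<open>All estimates are componentwise on the diagonal matrices. Since
  \<open>\<bar>\<psi>\<^sub>1\<bar>, \<bar>\<phi>\<bar> \<le> c\<^sub>0\<close> and \<open>\<bar>cos\<bar> \<le> 1\<close>, Cauchy-Schwarz bounds the two modification
  terms by \<open>c\<^sub>0\<^sup>2 \<parallel>A\<parallel> \<parallel>q\<parallel>\<^sup>2\<close> and \<open>c\<^sub>0\<^sup>4 \<parallel>A\<parallel>\<^sup>2 h\<^sup>2 \<parallel>q\<parallel>\<^sup>2\<close>. For the comparison with \<open>H\<close>, write
  \<open>(C\<Phi>q)\<^sup>* A \<Phi>q - q\<^sup>* A q = (C\<Phi>q - q)\<^sup>* A \<Phi>q + q\<^sup>* A (\<Phi>q - q)\<close> with \<open>C = cos(h\<Omega>)\<close>. The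
  diagonal entries of \<open>C\<Phi> - I\<close> and \<open>\<Phi> - I\<close> have the form \<open>g(h\<omega>\<^sub>j)\<close> with \<open>g\<close> bounded and
  \<open>O(\<xi>)\<close> at \<open>0\<close>, so they are \<open>O(min(h, \<omega>\<^sup>-\<^sup>1) \<omega>\<^sub>j)\<close>: if \<open>h \<le> \<omega>\<^sup>-\<^sup>1\<close> use the linear
  bound, otherwise \<open>\<omega>\<^sub>j / \<omega> \<ge> 1\<close> and boundedness suffices.\<close>

lemma Re_cinner: "Re (cinner x y) = x \<bullet> y"
  unfolding cinner_def inner_vec_def inner_complex_def by (simp add: Re_sum)

lemma diagm_mult: "diagm f *v x = (\<chi> i. complex_of_real (f i) * x$i)"
  unfolding diagm_def matrix_vector_mult_def
  by (simp add: vec_eq_iff if_distrib[where f="\<lambda>x. x * _"] cong: if_cong)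

lemma diagm_one_mult: "diagm (\<lambda>_. 1) *v x = x"
  by (simp add: diagm_mult vec_eq_iff)

lemma fdiag_mult_fdiag:
  "fdiag f h om *v (fdiag g h om *v x) = fdiag (\<lambda>\<xi>. f \<xi> * g \<xi>) h om *v x"
  by (simp add: fdiag_def diagm_mult vec_eq_iff)

lemma norm_le_scaled_componentwise_cart:
  fixes x y :: "'a::real_normed_vector^'n"
  assumes "\<And>i. norm (x$i) \<le> c * norm (y$i)"
  shows "norm x \<le> c * norm y"
proof (cases "0 \<le> c")
  case True
  have "norm x \<le> norm (c *\<^sub>R y)"
    by (rule norm_le_componentwise_cart) (use assms True in auto)
  with True show ?thesis by simp
next
  case False
  have "y$i = 0" for i
    using order_trans[OF norm_ge_zero assms[of i]] False by (simp add: zero_le_mult_iff)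
  moreover have "x$i = 0" for i
    using assms[of i] calculation by simp
  ultimately have "x = 0" and "y = 0" by (simp_all add: vec_eq_iff)
  then show ?thesis by simp
qed

lemma norm_diagm_mult_le:
  assumes "\<And>i. \<bar>f i\<bar> \<le> c * \<bar>g i\<bar>"
  shows "norm (diagm f *v x) \<le> c * norm (diagm g *v x)"
proof (rule norm_le_scaled_componentwise_cart)
  fix i
  show "norm ((diagm f *v x)$i) \<le> c * norm ((diagm g *v x)$i)"
    using mult_right_mono[OF assms[of i] norm_ge_zero[of "x$i"]]
    by (simp add: diagm_mult norm_mult mult.assoc)
qed

lemma norm_fdiag_mult_le:
  assumes "\<And>\<xi>. \<bar>f \<xi>\<bar> \<le> c"
  shows "norm (fdiag f h om *v x) \<le> c * norm x"
proof -
  have "norm (diagm (\<lambda>j. f (h * om j)) *v x) \<le> c * norm (diagm (\<lambda>_. 1) *v x)"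
    by (rule norm_diagm_mult_le) (simp add: assms)
  then show ?thesis by (simp add: fdiag_def diagm_one_mult)
qed

lemma norm_fdiag_mult_minus_le:
  assumes "\<forall>j. 0 \<le> om j" and "\<And>j. \<bar>f (h * om j) - 1\<bar> \<le> K * om j"
  shows "norm (fdiag f h om *v x - x) \<le> K * norm (diagm om *v x)"
proof -
  have "fdiag f h om *v x - x = diagm (\<lambda>j. f (h * om j) - 1) *v x"
    by (simp add: fdiag_def diagm_mult vec_eq_iff algebra_simps)
  also have "norm \<dots> \<le> K * norm (diagm om *v x)"
    using assms by (intro norm_diagm_mult_le) auto
  finally show ?thesis .
qed

lemma norm_mult_le_opnorm: "norm (A *v x) \<le> opnorm A * norm x"
  unfolding opnorm_def by (rule onorm) simp

lemma opnorm_nonneg: "0 \<le> opnorm A"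
  unfolding opnorm_def by (rule onorm_pos_le) simp

lemma abs_inner_matrix_diff_le:
  "\<bar>c \<bullet> (A *v p) - q \<bullet> (A *v q)\<bar>
     \<le> opnorm A * (norm (c - q) * norm p + norm q * norm (p - q))"
proof -
  have "c \<bullet> (A *v p) - q \<bullet> (A *v q) = (c - q) \<bullet> (A *v p) + q \<bullet> (A *v (p - q))"
    by (simp add: inner_diff_left inner_diff_right matrix_vector_mult_diff_distrib)
  also have "\<bar>\<dots>\<bar> \<le> norm (c - q) * norm (A *v p) + norm q * norm (A *v (p - q))"
    by (intro abs_triangle_ineq[THEN order_trans] add_mono Cauchy_Schwarz_ineq2)
  also have "\<dots> \<le> norm (c - q) * (opnorm A * norm p) + norm q * (opnorm A * norm (p - q))"
    by (intro add_mono mult_left_mono norm_mult_le_opnorm) auto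
  finally show ?thesis by (simp add: algebra_simps)
qed

lemma min_freq_pos_le:
  assumes "0 < om j"
  shows "0 < min_freq om" and "min_freq om \<le> om j"
proof -
  let ?S = "{om j | j. 0 < om j}"
  have "om j \<in> ?S" using assms by blast
  then have "?S \<noteq> {}" and "min_freq om \<le> om j" by (auto simp: min_freq_def)
  then show "min_freq om \<le> om j" and "0 < min_freq om"
    using Min_in[of ?S] by (auto simp: min_freq_def)
qed

text \<open>If no \<open>om j\<close> is positive, \<open>min_freq om\<close> is the junk value \<open>Min {}\<close>, possibly
  negative; this is why the scaled componentwise bounds allow negative constants.\<close>

lemma abs_scaled_freq_le:
  fixes om :: "'n::finite \<Rightarrow> real"
  assumes "\<forall>j. 0 \<le> om j" and "0 < h"
    and linear: "\<And>\<xi>. 0 \<le> \<xi> \<Longrightarrow> \<bar>g \<xi>\<bar> \<le> a * \<xi>" and bounded: "\<And>\<xi>. \<bar>g \<xi>\<bar> \<le> b"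
  shows "\<bar>g (h * om j)\<bar> \<le> max a b * (min h (inverse (min_freq om)) * om j)"
proof (cases "om j = 0")
  case True
  then show ?thesis using linear[of 0] by simp
next
  case False
  then have "0 < om j" using assms(1) by (simp add: order_less_le)
  note \<omega> = min_freq_pos_le[of om j, OF this]
  show ?thesis
  proof (cases "h \<le> inverse (min_freq om)")
    case True
    have "\<bar>g (h * om j)\<bar> \<le> a * (h * om j)" using assms by (intro linear) simp
    also have "\<dots> \<le> max a b * (h * om j)" using assms by (intro mult_right_mono) auto
    finally show ?thesis using True by simp
  next
    case False
    have "1 \<le> om j / min_freq om" using \<omega> by simp
    moreover have "0 \<le> max a b" using bounded[of 0] abs_ge_zero[of "g 0"] by linarith
    ultimately have "b \<le> max a b * (om j / min_freq om)"
      by (metis max.cobounded2 mult_le_cancel_left1 order_trans not_le)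
    then show ?thesis using False bounded[of "h * om j"] by (simp add: field_simps)
  qed
qed

lemma abs_cos_minus_one_le: "\<bar>cos x - 1\<bar> \<le> \<bar>x :: real\<bar>"
proof -
  let ?s = "\<bar>sin (x/2)\<bar>"
  have "\<bar>cos x - 1\<bar> = 2 * (?s * ?s)"
    using cos_double_sin[of "x/2"] by (simp add: power2_eq_square)
  also have "\<dots> \<le> 2 * (1 * ?s)"
    by (intro mult_left_mono mult_right_mono) auto
  also have "\<dots> \<le> \<bar>x\<bar>" using abs_sin_x_le_abs_x[of "x/2"] by simp
  finally show ?thesis .
qed

lemma abs_inner_filtered_le:
  assumes "\<forall>\<xi>. \<bar>phi \<xi>\<bar> \<le> c0"
  shows "\<bar>(fdiag cos h om *v (fdiag phi h om *v q)) \<bullet> (A *v (fdiag phi h om *v q))\<bar>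
           \<le> c0\<^sup>2 * opnorm A * (norm q)\<^sup>2"
proof -
  let ?p = "fdiag phi h om *v q"
  have c0: "0 \<le> c0" using assms abs_ge_zero order_trans by blast
  have p: "norm ?p \<le> c0 * norm q" using assms by (intro norm_fdiag_mult_le) auto
  have "\<bar>(fdiag cos h om *v ?p) \<bullet> (A *v ?p)\<bar> \<le> norm (fdiag cos h om *v ?p) * norm (A *v ?p)"
    by (rule Cauchy_Schwarz_ineq2)
  also have "\<dots> \<le> (1 * norm ?p) * (opnorm A * norm ?p)"
    by (intro mult_mono norm_fdiag_mult_le norm_mult_le_opnorm) auto
  also have "\<dots> \<le> (c0 * norm q) * (opnorm A * (c0 * norm q))"
    by (rule mult_mono[OF _ mult_left_mono]) (use p c0 opnorm_nonneg[of A] in auto)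
  finally show ?thesis by (simp add: power2_eq_square algebra_simps)
qed

lemma norm_filtered_correction_le:
  assumes "\<forall>\<xi>. \<bar>psi1 \<xi>\<bar> \<le> c0" and "\<forall>\<xi>. \<bar>phi \<xi>\<bar> \<le> c0"
  shows "norm (fdiag psi1 h om *v (A *v (fdiag phi h om *v q))) \<le> c0\<^sup>2 * opnorm A * norm q"
proof -
  let ?p = "fdiag phi h om *v q"
  have "0 \<le> c0" using assms(1) abs_ge_zero order_trans by blast
  have "norm (fdiag psi1 h om *v (A *v ?p)) \<le> c0 * norm (A *v ?p)"
    using assms(1) by (intro norm_fdiag_mult_le) auto
  also have "\<dots> \<le> c0 * (opnorm A * norm ?p)"
    using \<open>0 \<le> c0\<close> by (intro mult_left_mono norm_mult_le_opnorm)
  also have "\<dots> \<le> c0 * (opnorm A * (c0 * norm q))"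
    using \<open>0 \<le> c0\<close> assms(2) opnorm_nonneg by (intro mult_left_mono norm_fdiag_mult_le) auto
  finally show ?thesis by (simp add: power2_eq_square algebra_simps)
qed

context
  fixes om :: "'n::finite \<Rightarrow> real" and h c0 c1 :: real and phi :: "real \<Rightarrow> real"
  assumes om_nonneg: "\<forall>j. 0 \<le> om j" and h_pos: "0 < h"
    and phi_bounded: "\<forall>\<xi>. \<bar>phi \<xi>\<bar> \<le> c0"
    and phi_near_one: "\<forall>\<xi>. \<bar>phi \<xi> - 1\<bar> \<le> c1 * \<bar>\<xi>\<bar>"
begin

lemma abs_phi_minus_one_le:
  "\<bar>phi (h * om j) - 1\<bar> \<le> max (c0 + 1) c1 * (min h (inverse (min_freq om)) * om j)"
proof -
  have "\<bar>phi (h * om j) - 1\<bar> \<le> max c1 (c0 + 1) * (min h (inverse (min_freq om)) * om j)"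
  proof (rule abs_scaled_freq_le[OF om_nonneg h_pos])
    show "\<bar>phi \<xi> - 1\<bar> \<le> c1 * \<xi>" if "0 \<le> \<xi>" for \<xi>
      using phi_near_one[rule_format, of \<xi>] that by simp
    show "\<bar>phi \<xi> - 1\<bar> \<le> c0 + 1" for \<xi>
      using phi_bounded[rule_format, of \<xi>] by linarith
  qed
  then show ?thesis by (simp add: max.commute)
qed

lemma abs_cos_phi_minus_one_le:
  "\<bar>cos (h * om j) * phi (h * om j) - 1\<bar>
     \<le> (2 * c0 + max (c0 + 1) c1) * (min h (inverse (min_freq om)) * om j)"
proof -
  let ?a = "h * om j" and ?t = "min h (inverse (min_freq om)) * om j"
  have "\<bar>cos ?a - 1\<bar> \<le> max 1 2 * ?t"
  proof (rule abs_scaled_freq_le[OF om_nonneg h_pos])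
    show "\<bar>cos \<xi> - 1\<bar> \<le> 1 * \<xi>" if "0 \<le> \<xi>" for \<xi> :: real
      using abs_cos_minus_one_le[of \<xi>] that by simp
    show "\<bar>cos \<xi> - 1\<bar> \<le> 2" for \<xi> :: real
      using cos_le_one[of \<xi>] cos_ge_minus_one[of \<xi>] by linarith
  qed
  then have cos: "\<bar>cos ?a - 1\<bar> \<le> 2 * ?t" by simp
  then have "0 \<le> ?t" using abs_ge_zero[of "cos ?a - 1"] by linarith
  have "cos ?a * phi ?a - 1 = (cos ?a - 1) * phi ?a + (phi ?a - 1)"
    by (simp add: algebra_simps)
  then have "\<bar>cos ?a * phi ?a - 1\<bar> \<le> \<bar>cos ?a - 1\<bar> * \<bar>phi ?a\<bar> + \<bar>phi ?a - 1\<bar>"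
    by (metis abs_mult abs_triangle_ineq)
  also have "\<dots> \<le> (2 * ?t) * c0 + max (c0 + 1) c1 * ?t"
    using cos \<open>0 \<le> ?t\<close> phi_bounded abs_phi_minus_one_le[of j]
    by (intro add_mono mult_mono) (auto intro: order_trans[OF abs_ge_zero])
  finally show ?thesis by (simp add: algebra_simps)
qed

lemma inner_filtered_minus_inner_le:
  "\<bar>(fdiag cos h om *v (fdiag phi h om *v q)) \<bullet> (A *v (fdiag phi h om *v q)) - q \<bullet> (A *v q)\<bar>
     \<le> (2 * c0\<^sup>2 + (c0 + 1) * max (c0 + 1) c1) * opnorm A * min h (inverse (min_freq om))
        * norm q * norm (diagm om *v q)"
proof -
  let ?p = "fdiag phi h om *v q" and ?m = "min h (inverse (min_freq om))"
    and ?M = "max (c0 + 1) c1" and ?W = "norm (diagm om *v q)"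
  have p: "norm ?p \<le> c0 * norm q"
    using phi_bounded by (intro norm_fdiag_mult_le) auto
  have cp: "norm (fdiag cos h om *v ?p - q) \<le> ((2 * c0 + ?M) * ?m) * ?W"
    unfolding fdiag_mult_fdiag using om_nonneg abs_cos_phi_minus_one_le
    by (intro norm_fdiag_mult_minus_le) (auto simp: mult.assoc)
  have pq: "norm (?p - q) \<le> (?M * ?m) * ?W"
    using om_nonneg abs_phi_minus_one_le
    by (intro norm_fdiag_mult_minus_le) (auto simp: mult.assoc)
  have "\<bar>(fdiag cos h om *v ?p) \<bullet> (A *v ?p) - q \<bullet> (A *v q)\<bar>
      \<le> opnorm A * (norm (fdiag cos h om *v ?p - q) * norm ?p + norm q * norm (?p - q))"
    by (rule abs_inner_matrix_diff_le)
  also have "\<dots> \<le> opnorm A * (((2 * c0 + ?M) * ?m) * ?W * (c0 * norm q) + norm q * ((?M * ?m) * ?W))"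
    using cp p pq opnorm_nonneg
    by (intro mult_left_mono add_mono mult_mono) (auto intro: order_trans[OF norm_ge_zero])
  finally show ?thesis by (simp add: algebra_simps power2_eq_square)
qed

end

theorem lemma2:
  fixes om :: "'n::finite \<Rightarrow> real" and A :: "complex^'n^'n"
    and h c0 c1 :: real and psi1 phi :: "real \<Rightarrow> real"
  assumes "\<forall>j. om j \<ge> 0"
    and "self_adjoint A"
    and "0 < h" and "h \<le> 1"
    and "\<forall>x. psi1 (- x) = psi1 x" and "\<forall>x. phi (- x) = phi x"
    and "c0 \<ge> 0" and "c1 \<ge> 0"
    and "\<forall>\<xi>. \<bar>psi1 \<xi>\<bar> \<le> c0" and "\<forall>\<xi>. \<bar>phi \<xi>\<bar> \<le> c0"
    and "\<forall>\<xi>. \<bar>phi \<xi> - 1\<bar> \<le> c1 * \<bar>\<xi>\<bar>"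
  shows "\<forall>q qd :: complex^'n.
     \<bar>mod_energy h om A psi1 phi q qd - (1/2) * (norm (diagm om *v q))\<^sup>2 - (1/2) * (norm qd)\<^sup>2\<bar>
       \<le> ((1/2) * c0\<^sup>2 * opnorm A + (1/8) * c0^4 * (opnorm A)\<^sup>2 * h\<^sup>2) * (norm q)\<^sup>2
   \<and> \<bar>mod_energy h om A psi1 phi q qd - energy om A q qd\<bar>
       \<le> (1/2) * (2 * c0\<^sup>2 + (c0 + 1) * max (c0 + 1) c1) * opnorm A
            * min h (inverse (min_freq om)) * norm q * norm (diagm om *v q)
         + (1/8) * c0^4 * (opnorm A)\<^sup>2 * h\<^sup>2 * (norm q)\<^sup>2"
  apply (intro allI)
  subgoal for q qd
  proof -
    let ?I = "(fdiag cos h om *v (fdiag phi h om *v q)) \<bullet> (A *v (fdiag phi h om *v q))"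
      and ?X = "norm (fdiag psi1 h om *v (A *v (fdiag phi h om *v q)))"
    have "?X\<^sup>2 \<le> (c0\<^sup>2 * opnorm A * norm q)\<^sup>2"
      using assms(9,10) by (intro power_mono norm_filtered_correction_le) auto
    then have correction: "(1/8) * h\<^sup>2 * ?X\<^sup>2 \<le> (1/8) * c0^4 * (opnorm A)\<^sup>2 * h\<^sup>2 * (norm q)\<^sup>2"
      by (simp add: power_mult_distrib mult_left_mono algebra_simps)
    have "\<bar>?I\<bar> \<le> c0\<^sup>2 * opnorm A * (norm q)\<^sup>2"
      using assms(10) by (rule abs_inner_filtered_le)
    moreover have "\<bar>?I - q \<bullet> (A *v q)\<bar> \<le> (2 * c0\<^sup>2 + (c0 + 1) * max (c0 + 1) c1) * opnorm A
        * min h (inverse (min_freq om)) * norm q * norm (diagm om *v q)"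
      using assms(1,3,10,11) by (rule inner_filtered_minus_inner_le)
    moreover have "0 \<le> (1/8) * h\<^sup>2 * ?X\<^sup>2" by simp
    ultimately show ?thesis
      using correction
      unfolding mod_energy_def energy_def Re_cinner abs_le_iff
      by (intro conjI; simp add: algebra_simps; linarith)
  qed
  done

end
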